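(* For every integer $d\ge 2$ there is a constant $C_d>0$ such that for every positive integer $N$, \[ \mathfrak{C}_d(N) \geq \left(2 + \frac{2}{d+1} - \frac{C_d}{N}\right)(2N+1)^{d^2 + 1}. \]
   Context: For positive integers $d,N$, let $\mathrm{Mat}_d(\mathbb{Z},N)$ denote the set of $d\times d$ matrices with all entries in $[-N,N]\cap\mathbb{Z}$, and let $\mathfrak{C}_d(N)$ be the number of pairs $(A,B)\in \mathrm{Mat}_d(\mathbb{Z},N)^2$ with $AB=BA$. *)

theory Defs
  imports Complex_Main
begin

text \<open>d x d integer matrices represented as functions nat => nat => int, with entries
  indexed by i, j < d and required to be zero outside that range (so that each matrix
  is represented uniquely).\<close>

definition mat_box :: "nat \<Rightarrow> nat \<Rightarrow> (nat \<Rightarrow> nat \<Rightarrow> int) set" where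
  "mat_box d N = {A. (\<forall>i j. i < d \<and> j < d \<longrightarrow> \<bar>A i j\<bar> \<le> int N) \<and>
                     (\<forall>i j. \<not> (i < d \<and> j < d) \<longrightarrow> A i j = 0)}"

definition mat_mult :: "nat \<Rightarrow> (nat \<Rightarrow> nat \<Rightarrow> int) \<Rightarrow> (nat \<Rightarrow> nat \<Rightarrow> int) \<Rightarrow> nat \<Rightarrow> nat \<Rightarrow> int" where
  "mat_mult d A B = (\<lambda>i j. \<Sum>k<d. A i k * B k j)"

definition commuting_count :: "nat \<Rightarrow> nat \<Rightarrow> nat" where
  "commuting_count d N = card {(A, B). A \<in> mat_box d N \<and> B \<in> mat_box d N \<and>
      (\<forall>i<d. \<forall>j<d. mat_mult d A B i j = mat_mult d B A i j)}"

end

theory Submission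
  imports Defs "HOL-Library.FuncSet"
begin

(* Three explicit families of commuting pairs suffice: (a I, B) and (A, a I) with a scalar, and
   (A, A + c I).  The first two have (2N+1)^(d^2+1) elements each.  In the third, for a fixed shift
   c the d diagonal entries of A range over 2N+1-|c| values and the others are free, so it has
   (2N+1)^(d^2-d) * sum_{|c| <= 2N} (2N+1-|c|)^d elements; since n^(d+1) <= (d+1) sum_{k<=n} k^d
   this is at least (2/(d+1)) (2N+1)^(d^2+1) up to lower order terms.  Any two families meet only
   in pairs of scalar matrices, of which there are (2N+1)^2, so inclusion-exclusion gives the
   bound. *)

lemma card_int_interval_sym: "card {-int N..int N} = 2 * N + 1"
  by (simp add: nat_add_distrib)

lemma Suc_power_le: "(n + 1) ^ (d + 1) \<le> n ^ (d + 1) + (d + 1) * (n + 1) ^ d" for n d :: nat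
proof (induction d)
  case 0
  then show ?case by simp
next
  case (Suc d)
  have "(n + 1) ^ (Suc d + 1) = (n + 1) * (n + 1) ^ (d + 1)"
    by simp
  also have "\<dots> \<le> (n + 1) * (n ^ (d + 1) + (d + 1) * (n + 1) ^ d)"
    using Suc.IH by (rule mult_left_mono) simp
  also have "\<dots> = n ^ (Suc d + 1) + n ^ (d + 1) + (d + 1) * (n + 1) ^ (d + 1)"
    by (simp add: algebra_simps)
  also have "\<dots> \<le> n ^ (Suc d + 1) + (Suc d + 1) * (n + 1) ^ Suc d"
    using power_mono[of n "n + 1" "d + 1"] by simp
  finally show ?case .
qed

lemma power_le_sum_powers: "n ^ (d + 1) \<le> (d + 1) * (\<Sum>k=1..n. k ^ d)" for n d :: nat
proof (induction n)
  case 0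
  then show ?case by simp
next
  case (Suc n)
  have "Suc n ^ (d + 1) \<le> n ^ (d + 1) + (d + 1) * (n + 1) ^ d"
    using Suc_power_le[of n d] by simp
  also have "\<dots> \<le> (d + 1) * (\<Sum>k=1..Suc n. k ^ d)"
    using Suc.IH by (simp add: algebra_simps)
  finally show ?case .
qed

lemma sum_int_interval_sym:
  fixes f :: "nat \<Rightarrow> 'a::comm_semiring_1"
  shows "(\<Sum>c\<in>{-int n..int n}. f (nat \<bar>c\<bar>)) = f 0 + 2 * (\<Sum>k=1..n. f k)"
proof (induction n)
  case 0
  then show ?case by simp
next
  case (Suc n)
  have "{-int (Suc n)..int (Suc n)} = insert (int (Suc n)) (insert (- int (Suc n)) {-int n..int n})"
    by auto
  moreover have "nat (1 + int n) = Suc n"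
    by simp
  ultimately show ?case
    using Suc.IH by (simp add: algebra_simps mult_2)
qed

lemma sum_powers_distance:
  "(\<Sum>c\<in>{-int n..int n}. (n + 1 - nat \<bar>c\<bar>) ^ d) = (n + 1) ^ d + 2 * (\<Sum>k=1..n. k ^ d)"
proof -
  have "(\<Sum>k=1..n. (n + 1 - k) ^ d) = (\<Sum>k=1..n. k ^ d)"
    using sum.atLeastAtMost_rev[of "\<lambda>k. k ^ d" 1 n] by simp
  then show ?thesis
    using sum_int_interval_sym[of "\<lambda>k. (n + 1 - k) ^ d" n] by simp
qed

lemma card_Un3_ge:
  assumes "finite X" "finite Y" "finite Z"
  shows "card X + card Y + card Z \<le> card (X \<union> Y \<union> Z) + card (X \<inter> Y) + card (X \<inter> Z) + card (Y \<inter> Z)"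
proof -
  have "card X + card Y = card (X \<union> Y) + card (X \<inter> Y)"
    using assms by (intro card_Un_Int)
  moreover have "card (X \<union> Y) + card Z = card (X \<union> Y \<union> Z) + card ((X \<union> Y) \<inter> Z)"
    using assms by (intro card_Un_Int) auto
  moreover have "card ((X \<union> Y) \<inter> Z) \<le> card (X \<inter> Z) + card (Y \<inter> Z)"
    by (metis Int_Un_distrib2 card_Un_le)
  ultimately show ?thesis
    by linarith
qed

definition mat_with_entries :: "nat \<Rightarrow> (nat \<Rightarrow> nat \<Rightarrow> 'a::zero set) \<Rightarrow> (nat \<Rightarrow> nat \<Rightarrow> 'a) set" where
  "mat_with_entries d S = {A. (\<forall>i j. i < d \<and> j < d \<longrightarrow> A i j \<in> S i j) \<and>
                              (\<forall>i j. \<not> (i < d \<and> j < d) \<longrightarrow> A i j = 0)}"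

definition mat_of_fun :: "nat \<Rightarrow> (nat \<times> nat \<Rightarrow> 'a::zero) \<Rightarrow> nat \<Rightarrow> nat \<Rightarrow> 'a" where
  "mat_of_fun d g = (\<lambda>i j. if i < d \<and> j < d then g (i, j) else 0)"

lemma mat_with_entries_eq_image:
  "mat_with_entries d S = mat_of_fun d ` PiE ({..<d} \<times> {..<d}) (\<lambda>(i, j). S i j)"
proof (intro equalityI subsetI)
  fix A assume A: "A \<in> mat_with_entries d S"
  then have "A = mat_of_fun d (restrict (case_prod A) ({..<d} \<times> {..<d}))"
    by (auto simp: mat_with_entries_def mat_of_fun_def fun_eq_iff)
  moreover have "restrict (case_prod A) ({..<d} \<times> {..<d}) \<in> PiE ({..<d} \<times> {..<d}) (\<lambda>(i, j). S i j)"
    using A by (auto simp: mat_with_entries_def)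
  ultimately show "A \<in> mat_of_fun d ` PiE ({..<d} \<times> {..<d}) (\<lambda>(i, j). S i j)"
    by blast
next
  fix A assume "A \<in> mat_of_fun d ` PiE ({..<d} \<times> {..<d}) (\<lambda>(i, j). S i j)"
  then obtain g where "g \<in> PiE ({..<d} \<times> {..<d}) (\<lambda>(i, j). S i j)" and "A = mat_of_fun d g"
    by blast
  then show "A \<in> mat_with_entries d S"
    by (simp add: mat_with_entries_def mat_of_fun_def PiE_iff)
qed

lemma inj_on_mat_of_fun: "inj_on (mat_of_fun d) (PiE ({..<d} \<times> {..<d}) F)"
proof (rule inj_onI)
  fix f g
  assume f: "f \<in> PiE ({..<d} \<times> {..<d}) F" and g: "g \<in> PiE ({..<d} \<times> {..<d}) F"
    and eq: "mat_of_fun d f = mat_of_fun d g"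
  show "f = g"
  proof (rule PiE_ext[OF f g])
    fix x assume "x \<in> {..<d} \<times> {..<d}"
    then obtain i j where "x = (i, j)" "i < d" "j < d"
      by blast
    then show "f x = g x"
      using fun_cong[OF fun_cong[OF eq, of i], of j] by (simp add: mat_of_fun_def)
  qed
qed

lemma finite_mat_with_entries:
  assumes "\<And>i j. finite (S i j)"
  shows "finite (mat_with_entries d S)"
  unfolding mat_with_entries_eq_image using assms by (intro finite_imageI finite_PiE) auto

lemma card_mat_with_entries:
  assumes "\<And>i j. finite (S i j)"
  shows "card (mat_with_entries d S) = (\<Prod>i<d. \<Prod>j<d. card (S i j))"
proof -
  have "card (mat_with_entries d S) = card (PiE ({..<d} \<times> {..<d}) (\<lambda>(i, j). S i j))"
    unfolding mat_with_entries_eq_image by (rule card_image[OF inj_on_mat_of_fun])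
  also have "\<dots> = (\<Prod>(i, j) \<in> {..<d} \<times> {..<d}. card (S i j))"
    by (simp add: card_PiE case_prod_unfold)
  finally show ?thesis
    by (simp add: prod.cartesian_product case_prod_unfold)
qed

lemma card_mat_with_diag_entries:
  assumes "finite D" "finite E"
  shows "card (mat_with_entries d (\<lambda>i j. if i = j then D else E)) = card D ^ d * card E ^ (d * (d - 1))"
proof -
  have "(\<Prod>j<d. card (if i = j then D else E)) = card D * card E ^ (d - 1)" if "i < d" for i
    using that by (simp add: if_distrib[of card] eq_commute[of i] prod.delta_remove)
  then have "card (mat_with_entries d (\<lambda>i j. if i = j then D else E)) = (card D * card E ^ (d - 1)) ^ d"
    using assms by (simp add: card_mat_with_entries)
  also have "\<dots> = card D ^ d * card E ^ (d * (d - 1))"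
    by (metis mult.commute power_mult power_mult_distrib)
  finally show ?thesis .
qed

lemma mat_box_eq_mat_with_entries: "mat_box d N = mat_with_entries d (\<lambda>_ _. {-int N..int N})"
  by (auto simp: mat_box_def mat_with_entries_def abs_le_iff minus_le_iff)

lemma finite_mat_box: "finite (mat_box d N)"
  by (simp add: mat_box_eq_mat_with_entries finite_mat_with_entries)

lemma card_mat_box: "card (mat_box d N) = (2 * N + 1) ^ (d * d)"
  by (simp add: mat_box_eq_mat_with_entries card_mat_with_entries card_int_interval_sym power_mult
      del: card_atLeastAtMost_int)

definition scalar_mat :: "nat \<Rightarrow> int \<Rightarrow> nat \<Rightarrow> nat \<Rightarrow> int" where
  "scalar_mat d a = (\<lambda>i j. if i < d \<and> j < d \<and> i = j then a else 0)"

definition mat_add :: "(nat \<Rightarrow> nat \<Rightarrow> int) \<Rightarrow> (nat \<Rightarrow> nat \<Rightarrow> int) \<Rightarrow> nat \<Rightarrow> nat \<Rightarrow> int" where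
  "mat_add A B = (\<lambda>i j. A i j + B i j)"

definition mats_commute :: "nat \<Rightarrow> (nat \<Rightarrow> nat \<Rightarrow> int) \<Rightarrow> (nat \<Rightarrow> nat \<Rightarrow> int) \<Rightarrow> bool" where
  "mats_commute d A B \<longleftrightarrow> (\<forall>i<d. \<forall>j<d. mat_mult d A B i j = mat_mult d B A i j)"

lemma commuting_count_eq_card:
  "commuting_count d N = card {(A, B). A \<in> mat_box d N \<and> B \<in> mat_box d N \<and> mats_commute d A B}"
  by (simp add: commuting_count_def mats_commute_def)

lemma mats_commute_sym: "mats_commute d A B \<longleftrightarrow> mats_commute d B A"
  by (auto simp: mats_commute_def)

lemma mat_mult_scalar_mat_left: "i < d \<Longrightarrow> mat_mult d (scalar_mat d a) B i j = a * B i j"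
  by (simp add: mat_mult_def scalar_mat_def if_distrib[of "\<lambda>x. x * _"] cong: if_cong)

lemma mat_mult_scalar_mat_right: "j < d \<Longrightarrow> mat_mult d B (scalar_mat d a) i j = B i j * a"
  by (simp add: mat_mult_def scalar_mat_def if_distrib[of "\<lambda>x. _ * x"] cong: if_cong)

lemma mat_mult_mat_add_left: "mat_mult d (mat_add A B) C i j = mat_mult d A C i j + mat_mult d B C i j"
  by (simp add: mat_mult_def mat_add_def distrib_right sum.distrib)

lemma mat_mult_mat_add_right: "mat_mult d A (mat_add B C) i j = mat_mult d A B i j + mat_mult d A C i j"
  by (simp add: mat_mult_def mat_add_def distrib_left sum.distrib)

lemma mats_commute_scalar_mat: "mats_commute d (scalar_mat d a) B"
  by (simp add: mats_commute_def mat_mult_scalar_mat_left mat_mult_scalar_mat_right)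

lemma mats_commute_add_scalar_mat: "mats_commute d A (mat_add A (scalar_mat d c))"
  by (simp add: mats_commute_def mat_mult_mat_add_left mat_mult_mat_add_right
      mat_mult_scalar_mat_left mat_mult_scalar_mat_right mult.commute)

lemma mat_add_scalar_mat_scalar_mat: "mat_add (scalar_mat d a) (scalar_mat d b) = scalar_mat d (a + b)"
  by (auto simp: mat_add_def scalar_mat_def fun_eq_iff)

lemma mat_add_scalar_mat_cancel: "mat_add (mat_add A (scalar_mat d c)) (scalar_mat d (- c)) = A"
  by (auto simp: mat_add_def scalar_mat_def fun_eq_iff)

lemma scalar_mat_in_mat_box_iff: "0 < d \<Longrightarrow> scalar_mat d a \<in> mat_box d N \<longleftrightarrow> \<bar>a\<bar> \<le> int N"
  by (auto simp: mat_box_def scalar_mat_def)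

lemma inj_scalar_mat: "0 < d \<Longrightarrow> inj (scalar_mat d)"
  by (rule injI) (metis scalar_mat_def)

definition scalar_mats :: "nat \<Rightarrow> nat \<Rightarrow> (nat \<Rightarrow> nat \<Rightarrow> int) set" where
  "scalar_mats d N = scalar_mat d ` {-int N..int N}"

lemma scalar_mats_subset_mat_box: "scalar_mats d N \<subseteq> mat_box d N"
  by (auto simp: scalar_mats_def mat_box_def scalar_mat_def)

lemma scalar_mats_eq: "0 < d \<Longrightarrow> scalar_mats d N = mat_box d N \<inter> range (scalar_mat d)"
  by (auto simp: scalar_mats_def scalar_mat_in_mat_box_iff abs_le_iff)

lemma card_scalar_mats: "0 < d \<Longrightarrow> card (scalar_mats d N) = 2 * N + 1"
  unfolding scalar_mats_def
  by (subst card_image) (auto intro: inj_on_subset[OF inj_scalar_mat] simp: card_int_interval_sym)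

definition shifted_pairs :: "nat \<Rightarrow> nat \<Rightarrow> ((nat \<Rightarrow> nat \<Rightarrow> int) \<times> (nat \<Rightarrow> nat \<Rightarrow> int)) set" where
  "shifted_pairs d N = {(A, mat_add A (scalar_mat d c)) | A c.
      A \<in> mat_box d N \<and> mat_add A (scalar_mat d c) \<in> mat_box d N}"

lemma mat_box_shift_eq:
  "{A \<in> mat_box d N. mat_add A (scalar_mat d c) \<in> mat_box d N} =
     mat_with_entries d (\<lambda>i j. if i = j then {-int N..int N} \<inter> {-int N - c..int N - c} else {-int N..int N})"
proof (intro set_eqI)
  fix A :: "nat \<Rightarrow> nat \<Rightarrow> int"
  have entry: "\<bar>A i j\<bar> \<le> int N \<and> \<bar>A i j + (if i = j then c else 0)\<bar> \<le> int N \<longleftrightarrow>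
      A i j \<in> (if i = j then {-int N..int N} \<inter> {-int N - c..int N - c} else {-int N..int N})" for i j
    by auto
  have "A \<in> mat_box d N \<and> mat_add A (scalar_mat d c) \<in> mat_box d N \<longleftrightarrow>
      (\<forall>i j. i < d \<and> j < d \<longrightarrow> \<bar>A i j\<bar> \<le> int N \<and> \<bar>A i j + (if i = j then c else 0)\<bar> \<le> int N) \<and>
      (\<forall>i j. \<not> (i < d \<and> j < d) \<longrightarrow> A i j = 0)"
    by (auto simp: mat_box_def mat_add_def scalar_mat_def)
  then show "A \<in> {A \<in> mat_box d N. mat_add A (scalar_mat d c) \<in> mat_box d N} \<longleftrightarrow>
      A \<in> mat_with_entries d (\<lambda>i j. if i = j then {-int N..int N} \<inter> {-int N - c..int N - c} else {-int N..int N})"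
    by (simp only: mem_Collect_eq entry mat_with_entries_def)
qed

lemma card_mat_box_shift:
  assumes "\<bar>c\<bar> \<le> 2 * int N"
  shows "card {A \<in> mat_box d N. mat_add A (scalar_mat d c) \<in> mat_box d N} =
           (2 * N + 1 - nat \<bar>c\<bar>) ^ d * (2 * N + 1) ^ (d * (d - 1))"
proof -
  have "card ({-int N..int N} \<inter> {-int N - c..int N - c}) = 2 * N + 1 - nat \<bar>c\<bar>"
    using assms by auto
  then show ?thesis
    by (simp add: mat_box_shift_eq card_mat_with_diag_entries card_int_interval_sym
        del: card_atLeastAtMost_int)
qed

lemma shifted_pairs_eq_image:
  assumes "0 < d"
  shows "shifted_pairs d N = (\<lambda>(c, A). (A, mat_add A (scalar_mat d c))) `
           (SIGMA c:{-2 * int N..2 * int N}. {A \<in> mat_box d N. mat_add A (scalar_mat d c) \<in> mat_box d N})"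
proof -
  have bound: "c \<in> {-2 * int N..2 * int N}"
    if "A \<in> mat_box d N" "mat_add A (scalar_mat d c) \<in> mat_box d N" for A c
    using that assms by (force simp: mat_box_def mat_add_def scalar_mat_def)
  show ?thesis
  proof (intro equalityI subsetI)
    fix x assume "x \<in> shifted_pairs d N"
    then obtain A c where "x = (A, mat_add A (scalar_mat d c))"
      and "A \<in> mat_box d N" "mat_add A (scalar_mat d c) \<in> mat_box d N"
      unfolding shifted_pairs_def by blast
    then show "x \<in> (\<lambda>(c, A). (A, mat_add A (scalar_mat d c))) `
        (SIGMA c:{-2 * int N..2 * int N}. {A \<in> mat_box d N. mat_add A (scalar_mat d c) \<in> mat_box d N})"
      using bound by (intro image_eqI[where x = "(c, A)"]) auto
  qed (auto simp: shifted_pairs_def)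
qed

lemma card_shifted_pairs:
  assumes "0 < d"
  shows "card (shifted_pairs d N) = (2 * N + 1) ^ (d * (d - 1)) * ((2 * N + 1) ^ d + 2 * (\<Sum>k=1..2 * N. k ^ d))"
proof -
  let ?K = "{-2 * int N..2 * int N}"
  let ?F = "\<lambda>c. {A \<in> mat_box d N. mat_add A (scalar_mat d c) \<in> mat_box d N}"
  \<comment> \<open>the shift \<open>c\<close> is read off from the \<open>(0, 0)\<close> entries, which needs \<open>0 < d\<close>\<close>
  have "inj_on (\<lambda>(c, A). (A, mat_add A (scalar_mat d c))) (Sigma ?K ?F)"
    using assms by (auto simp: inj_on_def mat_add_def scalar_mat_def fun_eq_iff)
  then have "card (shifted_pairs d N) = (\<Sum>c\<in>?K. card (?F c))"
    using assms by (simp add: shifted_pairs_eq_image card_image card_SigmaI finite_mat_box)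
  also have "\<dots> = (\<Sum>c\<in>?K. (2 * N + 1 - nat \<bar>c\<bar>) ^ d * (2 * N + 1) ^ (d * (d - 1)))"
    by (intro sum.cong) (simp_all add: card_mat_box_shift abs_le_iff)
  also have "\<dots> = (2 * N + 1) ^ (d * (d - 1)) * ((2 * N + 1) ^ d + 2 * (\<Sum>k=1..2 * N. k ^ d))"
    using sum_powers_distance[of "2 * N" d] by (simp add: mult.commute flip: sum_distrib_right)
  finally show ?thesis .
qed

lemma shifted_pairs_subset_commuting:
  "shifted_pairs d N \<subseteq> {(A, B). A \<in> mat_box d N \<and> B \<in> mat_box d N \<and> mats_commute d A B}"
  by (auto simp: shifted_pairs_def mats_commute_add_scalar_mat)

lemma scalar_left_Int_shifted_pairs:
  assumes "0 < d"
  shows "(scalar_mats d N \<times> mat_box d N) \<inter> shifted_pairs d N \<subseteq> scalar_mats d N \<times> scalar_mats d N"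
  using assms by (auto simp: shifted_pairs_def scalar_mats_eq mat_add_scalar_mat_scalar_mat)

lemma scalar_right_Int_shifted_pairs:
  assumes "0 < d"
  shows "(mat_box d N \<times> scalar_mats d N) \<inter> shifted_pairs d N \<subseteq> scalar_mats d N \<times> scalar_mats d N"
proof
  fix x assume x: "x \<in> (mat_box d N \<times> scalar_mats d N) \<inter> shifted_pairs d N"
  then obtain A c where A: "x = (A, mat_add A (scalar_mat d c))" "A \<in> mat_box d N"
    unfolding shifted_pairs_def by blast
  with x obtain b where b: "mat_add A (scalar_mat d c) = scalar_mat d b"
    unfolding scalar_mats_def by auto
  have "A = scalar_mat d (b - c)"
    using mat_add_scalar_mat_cancel[of A d c] by (simp add: b mat_add_scalar_mat_scalar_mat)
  then show "x \<in> scalar_mats d N \<times> scalar_mats d N"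
    using assms A x by (auto simp: scalar_mats_eq)
qed

lemma commuting_count_lower_bound:
  fixes d N :: nat
  assumes d: "0 < d"
  defines "M \<equiv> 2 * N + 1"
  shows "2 * M ^ (d * d + 1) + M ^ (d * (d - 1)) * (M ^ d + 2 * (\<Sum>k=1..2 * N. k ^ d))
           \<le> commuting_count d N + 3 * M\<^sup>2"
proof -
  define S where "S = scalar_mats d N"
  define B where "B = mat_box d N"
  define X where "X = S \<times> B"
  define Y where "Y = B \<times> S"
  define Z where "Z = shifted_pairs d N"
  define P where "P = {(A, A'). A \<in> B \<and> A' \<in> B \<and> mats_commute d A A'}"
  have "S \<subseteq> B"
    by (simp add: S_def B_def scalar_mats_subset_mat_box)
  moreover have "Z \<subseteq> P" "P \<subseteq> B \<times> B"
    using shifted_pairs_subset_commuting by (auto simp: Z_def P_def B_def)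
  moreover have "finite B"
    by (simp add: B_def finite_mat_box)
  ultimately have "finite S" "finite P"
    by (meson finite_SigmaI finite_subset)+
  with \<open>Z \<subseteq> P\<close> \<open>finite B\<close> have fin: "finite S" "finite X" "finite Y" "finite Z" "finite P"
    by (auto simp: X_def Y_def intro: finite_subset)
  have "X \<union> Y \<union> Z \<subseteq> P"
    using \<open>Z \<subseteq> P\<close> \<open>S \<subseteq> B\<close> mats_commute_scalar_mat mats_commute_sym
    by (auto simp: X_def Y_def P_def S_def scalar_mats_def)
  then have "card (X \<union> Y \<union> Z) \<le> commuting_count d N"
    using fin by (simp add: commuting_count_eq_card P_def B_def card_mono)
  moreover have "card (X \<inter> Y) \<le> M\<^sup>2" "card (X \<inter> Z) \<le> M\<^sup>2" "card (Y \<inter> Z) \<le> M\<^sup>2"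
  proof -
    have "X \<inter> Y \<subseteq> S \<times> S" "X \<inter> Z \<subseteq> S \<times> S" "Y \<inter> Z \<subseteq> S \<times> S"
      using scalar_left_Int_shifted_pairs[OF d] scalar_right_Int_shifted_pairs[OF d]
      by (auto simp: X_def Y_def Z_def S_def B_def)
    moreover have "card (S \<times> S) = M\<^sup>2"
      using d by (simp add: card_cartesian_product S_def card_scalar_mats M_def power2_eq_square)
    ultimately show "card (X \<inter> Y) \<le> M\<^sup>2" "card (X \<inter> Z) \<le> M\<^sup>2" "card (Y \<inter> Z) \<le> M\<^sup>2"
      using fin by (metis card_mono finite_SigmaI)+
  qed
  moreover have "card X = M ^ (d * d + 1)" "card Y = M ^ (d * d + 1)"
    using d by (simp_all add: X_def Y_def S_def B_def card_cartesian_product card_scalar_mats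
        card_mat_box M_def)
  moreover have "card Z = M ^ (d * (d - 1)) * (M ^ d + 2 * (\<Sum>k=1..2 * N. k ^ d))"
    using d by (simp add: Z_def card_shifted_pairs M_def)
  ultimately show ?thesis
    using card_Un3_ge[of X Y Z] fin by linarith
qed

lemma commuting_count_ge_nat:
  assumes "2 \<le> d"
  shows "2 * (d + 2) * (2 * N + 1) ^ (d\<^sup>2 + 1) \<le> (d + 1) * (commuting_count d N + 4 * (2 * N + 1) ^ d\<^sup>2)"
proof -
  define M where "M = 2 * N + 1"
  define Q where "Q = M ^ (d * (d - 1))"
  define s where "s = (\<Sum>k=1..2 * N. k ^ d)"
  define R where "R = M ^ d\<^sup>2"
  have QR: "Q * M ^ d = R"
    using assms unfolding Q_def R_def by (simp add: power2_eq_square algebra_simps flip: power_add)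
  have RM: "M ^ (d\<^sup>2 + 1) = R * M"
    by (simp add: R_def)
  have "2 * M ^ (d\<^sup>2 + 1) + Q * (M ^ d + 2 * s) \<le> commuting_count d N + 3 * M\<^sup>2"
    using commuting_count_lower_bound[of d N] assms unfolding M_def Q_def s_def
    by (simp add: power2_eq_square)
  then have count: "2 * (R * M) + R + 2 * (Q * s) \<le> commuting_count d N + 3 * M\<^sup>2"
    by (simp only: RM distrib_left QR)
  have "2 \<le> d\<^sup>2"
    using assms mult_le_mono[of 1 d 2 d] by (simp add: power2_eq_square)
  then have "M\<^sup>2 \<le> R"
    unfolding R_def by (intro power_increasing) (simp_all add: M_def)
  have "M ^ (d + 1) \<le> (d + 1) * (s + M ^ d)"
    using power_le_sum_powers[of M d] by (simp add: M_def s_def)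
  then have "Q * M ^ (d + 1) \<le> Q * ((d + 1) * (s + M ^ d))"
    by (rule mult_left_mono) simp
  then have sums: "R * M \<le> (d + 1) * (Q * s + R)"
    by (simp add: algebra_simps flip: QR)
  have "(d + 1) * (2 * (R * M) + 2 * (Q * s)) \<le> (d + 1) * (commuting_count d N + 2 * R)"
    using count \<open>M\<^sup>2 \<le> R\<close> by (intro mult_left_mono) linarith+
  with sums have "2 * (d + 2) * (R * M) \<le> (d + 1) * (commuting_count d N + 4 * R)"
    by (simp add: algebra_simps)
  then show ?thesis
    unfolding M_def[symmetric] R_def[symmetric] RM by (simp only: mult.assoc)
qed

lemma commuting_count_ge:
  assumes "2 \<le> d" "1 \<le> N"
  shows "(2 + 2 / real (d + 1) - 4 / real N) * real (2 * N + 1) ^ (d\<^sup>2 + 1) \<le> real (commuting_count d N)"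
proof -
  define T where "T = real (2 * N + 1) ^ (d\<^sup>2 + 1)"
  define R where "R = real (2 * N + 1) ^ d\<^sup>2"
  have "2 * (real d + 2) * T \<le> (real d + 1) * (real (commuting_count d N) + 4 * R)"
    using commuting_count_ge_nat[OF assms(1), of N] unfolding T_def R_def
    by (metis (mono_tags) of_nat_add of_nat_le_iff of_nat_mult of_nat_numeral of_nat_power of_nat_1)
  then have "(2 + 2 / real (d + 1)) * T \<le> real (commuting_count d N) + 4 * R"
    by (simp add: field_simps)
  moreover have "4 * R \<le> 4 / real N * T"
    using assms(2) by (simp add: T_def R_def field_simps mult_right_mono)
  ultimately show ?thesis
    unfolding T_def by (simp add: left_diff_distrib)
qed

theorem lemma1p4:
  shows "\<forall>d::nat. d \<ge> 2 \<longrightarrow> (\<exists>C::real. C > 0 \<and> (\<forall>N::nat. N \<ge> 1 \<longrightarrow>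
    real (commuting_count d N) \<ge>
      (2 + 2 / real (d + 1) - C / real N) * real (2 * N + 1) ^ (d\<^sup>2 + 1)))"
  using commuting_count_ge by (intro allI impI exI[of _ 4]) simp_all

end
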